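(* For a restless bandit as in the context, every stationary policy $u$, every $S\subseteq N^{\{0,1\}}$ and every $i\in N$, $$v^S_i+\sum_{j\in S}c^S_j\,x^{0,u}_{ij}=v^u_i+\sum_{j\in N^{\{0,1\}}\setminus S}c^S_j\,x^{1,u}_{ij}.$$
   Context: Restless bandit: finite state space $N=N^{\{0,1\}}\cup N^{\{1\}}$ (disjoint); actions $a\in\{0,1\}$; one-period costs $h^a_i$; transition probabilities $p^a_{ij}$, with $p^1_{ij}=p^0_{ij}$ and $h^1_i=h^0_i$ for $i\in N^{\{1\}}$ (no effective choice there); discount factor $\beta\in(0,1)$. Stationary policies $u:N\to[0,1]$ (probability of active action) with $u(i)=1$ on $N^{\{1\}}$. $v^u_i=E^u_i[\sum_{t\ge0}h^{a(t)}_{X(t)}\beta^t]$, $x^{a,u}_{ij}=E^u_i[\sum_{t\ge0}1\{X(t)=j,a(t)=a\}\beta^t]$. For $S\subseteq N^{\{0,1\}}$ the $S$-active policy is active on $S\cup N^{\{1\}}$ and passive elsewhere; $v^S_i$ its cost measure. Marginal costs: $c^S_i=h^0_i-h^1_i+\beta\sum_{j\in N}(p^0_{ij}-p^1_{ij})v^S_j$. *)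

theory Defs
  imports Complex_Main
begin

text \<open>Restless bandit on a finite state type 's (state space N = UNIV).
  Actions are encoded as naturals 0 (passive) and 1 (active).
  A stationary policy u gives at each state the probability of the active action.\<close>

definition policy_trans :: "('s \<Rightarrow> 's \<Rightarrow> real) \<Rightarrow> ('s \<Rightarrow> 's \<Rightarrow> real) \<Rightarrow> ('s \<Rightarrow> real) \<Rightarrow> 's \<Rightarrow> 's \<Rightarrow> real" where
  "policy_trans p0 p1 u i j = u i * p1 i j + (1 - u i) * p0 i j"

fun nstep :: "('s::finite \<Rightarrow> 's \<Rightarrow> real) \<Rightarrow> nat \<Rightarrow> 's \<Rightarrow> 's \<Rightarrow> real" where
  "nstep P 0 i j = (if i = j then 1 else 0)"
| "nstep P (Suc t) i j = (\<Sum>k\<in>UNIV. nstep P t i k * P k j)"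

definition act_prob :: "('s \<Rightarrow> real) \<Rightarrow> nat \<Rightarrow> 's \<Rightarrow> real" where
  "act_prob u a j = (if a = 0 then 1 - u j else u j)"

text \<open>Discounted state-action occupation measure
  x^{a,u}_{ij} = E^u_i [ sum_t 1{X(t)=j, a(t)=a} beta^t ].\<close>
definition occ :: "real \<Rightarrow> ('s::finite \<Rightarrow> 's \<Rightarrow> real) \<Rightarrow> ('s \<Rightarrow> 's \<Rightarrow> real) \<Rightarrow> ('s \<Rightarrow> real) \<Rightarrow> nat \<Rightarrow> 's \<Rightarrow> 's \<Rightarrow> real" where
  "occ \<beta> p0 p1 u a i j = (\<Sum>t. \<beta> ^ t * nstep (policy_trans p0 p1 u) t i j * act_prob u a j)"

text \<open>Discounted cost v^u_i = E^u_i [ sum_t h^{a(t)}_{X(t)} beta^t ].\<close>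
definition cost :: "real \<Rightarrow> ('s::finite \<Rightarrow> 's \<Rightarrow> real) \<Rightarrow> ('s \<Rightarrow> 's \<Rightarrow> real) \<Rightarrow> ('s \<Rightarrow> real) \<Rightarrow> ('s \<Rightarrow> real) \<Rightarrow> ('s \<Rightarrow> real) \<Rightarrow> 's \<Rightarrow> real" where
  "cost \<beta> p0 p1 h0 h1 u i =
     (\<Sum>t. \<beta> ^ t * (\<Sum>j\<in>UNIV. nstep (policy_trans p0 p1 u) t i j *
                          (act_prob u 0 j * h0 j + act_prob u 1 j * h1 j)))"

text \<open>The S-active policy (N1 = states with only the active action).\<close>
definition S_active :: "'s set \<Rightarrow> 's set \<Rightarrow> 's \<Rightarrow> real" where
  "S_active N1 S j = (if j \<in> S \<union> N1 then 1 else 0)"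

definition marg_cost :: "real \<Rightarrow> ('s::finite \<Rightarrow> 's \<Rightarrow> real) \<Rightarrow> ('s \<Rightarrow> 's \<Rightarrow> real) \<Rightarrow> ('s \<Rightarrow> real) \<Rightarrow> ('s \<Rightarrow> real) \<Rightarrow> 's set \<Rightarrow> 's set \<Rightarrow> 's \<Rightarrow> real" where
  "marg_cost \<beta> p0 p1 h0 h1 N1 S i =
     h0 i - h1 i + \<beta> * (\<Sum>j\<in>UNIV. (p0 i j - p1 i j) * cost \<beta> p0 p1 h0 h1 (S_active N1 S) j)"

end

theory Submission
  imports Defs
begin

text \<open>Let \<open>v\<close> be the cost of the \<open>S\<close>-active policy. For any \<open>w\<close>, uniqueness of the
  solution of the Bellman equation of \<open>u\<close> gives \<open>w = v\<^sup>u + R\<^sup>u r\<close>, where \<open>r = w - h\<^sup>u - \<beta> P\<^sup>u w\<close>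
  is the Bellman residual of \<open>w\<close> and the entries of \<open>R\<^sup>u = (I - \<beta> P\<^sup>u)\<^sup>-\<^sup>1\<close> are the discounted
  state occupancies. Take \<open>w = v\<close>: \<open>h\<^sup>u + \<beta> P\<^sup>u v\<close> is the \<open>u\<close>-mixture of the two action values
  of \<open>v\<close>, whose difference is \<open>c\<^sup>S\<close>, and \<open>v\<close> equals the active action value on \<open>S \<union> N1\<close> and the
  passive one elsewhere. So the residual is \<open>-(1 - u) c\<^sup>S\<close> on \<open>S\<close>, \<open>u c\<^sup>S\<close> on \<open>N01 - S\<close> and \<open>0\<close>
  on \<open>N1\<close>, where \<open>u = 1\<close>.\<close>

definition stochastic :: "('s::finite \<Rightarrow> 's \<Rightarrow> real) \<Rightarrow> bool" where
  "stochastic P \<longleftrightarrow> (\<forall>j k. 0 \<le> P j k) \<and> (\<forall>j. (\<Sum>k\<in>UNIV. P j k) = 1)"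

lemma stochastic_policy_trans:
  assumes "stochastic p0" "stochastic p1" "\<And>j. 0 \<le> w j \<and> w j \<le> 1"
  shows "stochastic (policy_trans p0 p1 w)"
  using assms unfolding stochastic_def policy_trans_def
  by (auto simp: sum.distrib sum_distrib_left[symmetric] intro!: add_nonneg_nonneg mult_nonneg_nonneg)

lemma nstep_nonneg: "stochastic P \<Longrightarrow> 0 \<le> nstep P t i j"
  by (induction t arbitrary: j) (auto simp: stochastic_def intro!: sum_nonneg)

lemma nstep_row_sum: "stochastic P \<Longrightarrow> (\<Sum>j\<in>UNIV. nstep P t i j) = 1"
proof (induction t)
  case (Suc t)
  have "(\<Sum>j\<in>UNIV. nstep P (Suc t) i j) = (\<Sum>k\<in>UNIV. \<Sum>j\<in>UNIV. nstep P t i k * P k j)"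
    by (simp only: nstep.simps) (rule sum.swap)
  also have "\<dots> = (\<Sum>k\<in>UNIV. nstep P t i k * (\<Sum>j\<in>UNIV. P k j))"
    by (simp add: sum_distrib_left)
  also have "\<dots> = 1" using Suc by (simp add: stochastic_def)
  finally show ?case .
qed simp

lemma nstep_le_one: "stochastic P \<Longrightarrow> nstep P t i j \<le> 1"
  using member_le_sum[of j UNIV "nstep P t i"] by (simp add: nstep_nonneg nstep_row_sum)

lemma nstep_Suc': "nstep P (Suc t) i j = (\<Sum>k\<in>UNIV. P i k * nstep P t k j)"
proof (induction t arbitrary: j)
  case (Suc t)
  have "nstep P (Suc (Suc t)) i j = (\<Sum>m\<in>UNIV. \<Sum>k\<in>UNIV. P i k * nstep P t k m * P m j)"
    using Suc by (simp add: sum_distrib_right)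
  also have "\<dots> = (\<Sum>k\<in>UNIV. P i k * nstep P (Suc t) k j)"
    by (subst sum.swap) (simp add: sum_distrib_left mult.assoc)
  finally show ?case .
qed (simp add: if_distrib[of "\<lambda>y. y * _"] if_distrib[of "\<lambda>y. _ * y"] cong: if_cong)

definition disc_value :: "real \<Rightarrow> ('s::finite \<Rightarrow> 's \<Rightarrow> real) \<Rightarrow> ('s \<Rightarrow> real) \<Rightarrow> 's \<Rightarrow> real" where
  "disc_value \<beta> P f i = (\<Sum>t. \<beta> ^ t * (\<Sum>j\<in>UNIV. nstep P t i j * f j))"

definition disc_occupancy :: "real \<Rightarrow> ('s::finite \<Rightarrow> 's \<Rightarrow> real) \<Rightarrow> 's \<Rightarrow> 's \<Rightarrow> real" where
  "disc_occupancy \<beta> P i j = (\<Sum>t. \<beta> ^ t * nstep P t i j)"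

lemma summable_disc_value:
  assumes P: "stochastic P" and \<beta>: "0 \<le> \<beta>" "\<beta> < 1"
  shows "summable (\<lambda>t. \<beta> ^ t * (\<Sum>j\<in>UNIV. nstep P t i j * f j))"
proof (rule summable_comparison_test')
  show "summable (\<lambda>t. \<beta> ^ t * (\<Sum>j\<in>UNIV. \<bar>f j\<bar>))"
    using \<beta> by (intro summable_mult2 summable_geometric) simp
next
  fix t
  have "\<bar>\<Sum>j\<in>UNIV. nstep P t i j * f j\<bar> \<le> (\<Sum>j\<in>UNIV. nstep P t i j * \<bar>f j\<bar>)"
    using sum_abs[of "\<lambda>j. nstep P t i j * f j" UNIV] by (simp add: abs_mult nstep_nonneg[OF P])
  also have "\<dots> \<le> (\<Sum>j\<in>UNIV. \<bar>f j\<bar>)"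
    by (intro sum_mono mult_left_le_one_le) (simp_all add: nstep_nonneg[OF P] nstep_le_one[OF P])
  finally show "norm (\<beta> ^ t * (\<Sum>j\<in>UNIV. nstep P t i j * f j)) \<le> \<beta> ^ t * (\<Sum>j\<in>UNIV. \<bar>f j\<bar>)"
    using \<beta> by (simp add: abs_mult mult_left_mono)
qed

lemma summable_disc_occupancy:
  assumes "stochastic P" "0 \<le> \<beta>" "\<beta> < 1"
  shows "summable (\<lambda>t. \<beta> ^ t * nstep P t i j)"
  using summable_disc_value[OF assms, of i "\<lambda>k. if k = j then 1 else 0"]
  by (simp add: if_distrib[of "\<lambda>y. _ * y"] cong: if_cong)

lemma disc_value_eq_occupancy_sum:
  assumes "stochastic P" "0 \<le> \<beta>" "\<beta> < 1"
  shows "disc_value \<beta> P f i = (\<Sum>j\<in>UNIV. disc_occupancy \<beta> P i j * f j)"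
proof -
  have "disc_value \<beta> P f i = (\<Sum>t. \<Sum>j\<in>UNIV. \<beta> ^ t * nstep P t i j * f j)"
    unfolding disc_value_def by (simp add: sum_distrib_left mult.assoc)
  also have "\<dots> = (\<Sum>j\<in>UNIV. \<Sum>t. \<beta> ^ t * nstep P t i j * f j)"
    by (intro suminf_sum summable_mult2 summable_disc_occupancy[OF assms])
  also have "\<dots> = (\<Sum>j\<in>UNIV. disc_occupancy \<beta> P i j * f j)"
    unfolding disc_occupancy_def
    by (intro sum.cong refl suminf_mult2[symmetric] summable_disc_occupancy[OF assms])
  finally show ?thesis .
qed

lemma disc_value_bellman:
  assumes P: "stochastic P" and \<beta>: "0 \<le> \<beta>" "\<beta> < 1"
  shows "disc_value \<beta> P f i = f i + \<beta> * (\<Sum>k\<in>UNIV. P i k * disc_value \<beta> P f k)"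
proof -
  let ?a = "\<lambda>k t. \<beta> ^ t * (\<Sum>j\<in>UNIV. nstep P t k j * f j)"
  have summable: "summable (?a k)" for k
    by (rule summable_disc_value[OF P \<beta>])
  have shift: "?a i (Suc t) = \<beta> * (\<Sum>k\<in>UNIV. P i k * ?a k t)" for t
  proof -
    have "?a i (Suc t) = \<beta> * (\<beta> ^ t * (\<Sum>j\<in>UNIV. \<Sum>k\<in>UNIV. P i k * (nstep P t k j * f j)))"
      by (simp only: nstep_Suc' sum_distrib_right mult.assoc power_Suc)
    also have "\<dots> = \<beta> * (\<Sum>k\<in>UNIV. P i k * ?a k t)"
      by (subst sum.swap) (simp add: sum_distrib_left mult.left_commute)
    finally show ?thesis .
  qed
  have "(\<Sum>t. ?a i (Suc t)) = \<beta> * (\<Sum>t. \<Sum>k\<in>UNIV. P i k * ?a k t)"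
    unfolding shift by (intro suminf_mult summable_sum summable_mult summable)
  also have "\<dots> = \<beta> * (\<Sum>k\<in>UNIV. P i k * disc_value \<beta> P f k)"
    unfolding disc_value_def
    by (subst suminf_sum) (auto intro!: sum.cong summable_mult summable suminf_mult)
  finally have "(\<Sum>t. ?a i (Suc t)) = \<beta> * (\<Sum>k\<in>UNIV. P i k * disc_value \<beta> P f k)" .
  moreover have "?a i 0 = f i"
    by (simp add: if_distrib[of "\<lambda>y. y * _"] cong: if_cong)
  ultimately show ?thesis
    using suminf_split_head[OF summable[of i]] unfolding disc_value_def by simp
qed

text \<open>A state where \<open>\<bar>d\<bar>\<close> is maximal gives \<open>max \<bar>d\<bar> \<le> \<beta> max \<bar>d\<bar>\<close>.\<close>

lemma bellman_homogeneous_zero: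
  assumes P: "stochastic P" and \<beta>: "0 \<le> \<beta>" "\<beta> < 1"
    and d: "\<And>i. d i = \<beta> * (\<Sum>k\<in>UNIV. P i k * d k)"
  shows "d i = 0"
proof -
  define M where "M = Max (range (\<lambda>i. \<bar>d i\<bar>))"
  have le_M: "\<bar>d j\<bar> \<le> M" for j
    unfolding M_def by (rule Max_ge) auto
  have "M \<in> range (\<lambda>i. \<bar>d i\<bar>)"
    unfolding M_def by (rule Max_in) auto
  then obtain i0 where i0: "M = \<bar>d i0\<bar>"
    by blast
  have "\<bar>\<Sum>k\<in>UNIV. P i0 k * d k\<bar> \<le> (\<Sum>k\<in>UNIV. P i0 k * M)"
    using P le_M
    by (intro order_trans[OF sum_abs] sum_mono) (auto simp: stochastic_def abs_mult mult_left_mono)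
  also have "\<dots> = M"
    using P by (simp add: stochastic_def sum_distrib_right[symmetric])
  finally have "M \<le> \<beta> * M"
    using d[of i0] i0 \<beta> by (simp add: abs_mult mult_left_mono)
  then have "M \<le> 0"
    using \<beta> by (simp add: mult_le_cancel_right1)
  then show ?thesis
    using le_M[of i] by simp
qed

lemma disc_value_add_residual:
  assumes P: "stochastic P" and \<beta>: "0 \<le> \<beta>" "\<beta> < 1"
  shows "w i = disc_value \<beta> P f i
                + disc_value \<beta> P (\<lambda>j. w j - f j - \<beta> * (\<Sum>k\<in>UNIV. P j k * w k)) i"
    (is "_ = _ + disc_value \<beta> P ?r i")
proof -
  have "(\<lambda>j. w j - disc_value \<beta> P f j - disc_value \<beta> P ?r j) i = 0"
  proof (rule bellman_homogeneous_zero[OF P \<beta>])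
    fix j
    show "w j - disc_value \<beta> P f j - disc_value \<beta> P ?r j
          = \<beta> * (\<Sum>k\<in>UNIV. P j k * (w k - disc_value \<beta> P f k - disc_value \<beta> P ?r k))"
      using disc_value_bellman[OF P \<beta>, of f j] disc_value_bellman[OF P \<beta>, of ?r j]
      by (simp add: right_diff_distrib sum_subtractf)
  qed
  then show ?thesis by simp
qed

definition policy_cost :: "('s \<Rightarrow> real) \<Rightarrow> ('s \<Rightarrow> real) \<Rightarrow> ('s \<Rightarrow> real) \<Rightarrow> 's \<Rightarrow> real" where
  "policy_cost h0 h1 w j = act_prob w 0 j * h0 j + act_prob w 1 j * h1 j"

definition action_value :: "real \<Rightarrow> ('s::finite \<Rightarrow> 's \<Rightarrow> real) \<Rightarrow> ('s \<Rightarrow> real) \<Rightarrow> ('s \<Rightarrow> real) \<Rightarrow> 's \<Rightarrow> real" where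
  "action_value \<beta> p h v j = h j + \<beta> * (\<Sum>k\<in>UNIV. p j k * v k)"

lemma cost_eq_disc_value:
  "cost \<beta> p0 p1 h0 h1 w i = disc_value \<beta> (policy_trans p0 p1 w) (policy_cost h0 h1 w) i"
  unfolding cost_def disc_value_def policy_cost_def ..

lemma occ_eq_disc_occupancy:
  assumes "stochastic (policy_trans p0 p1 u)" "0 \<le> \<beta>" "\<beta> < 1"
  shows "occ \<beta> p0 p1 u a i j = disc_occupancy \<beta> (policy_trans p0 p1 u) i j * act_prob u a j"
  unfolding occ_def disc_occupancy_def by (intro suminf_mult2[symmetric] summable_disc_occupancy[OF assms])

lemma policy_cost_add_expectation:
  "policy_cost h0 h1 w j + \<beta> * (\<Sum>k\<in>UNIV. policy_trans p0 p1 w j k * v k)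
     = (1 - w j) * action_value \<beta> p0 h0 v j + w j * action_value \<beta> p1 h1 v j"
proof -
  have expectation: "(\<Sum>k\<in>UNIV. policy_trans p0 p1 w j k * v k)
          = w j * (\<Sum>k\<in>UNIV. p1 j k * v k) + (1 - w j) * (\<Sum>k\<in>UNIV. p0 j k * v k)"
    by (simp add: policy_trans_def distrib_right sum.distrib sum_distrib_left mult.assoc)
  show ?thesis
    unfolding expectation by (simp add: policy_cost_def act_prob_def action_value_def algebra_simps)
qed

lemma marg_cost_eq_action_value_diff:
  "marg_cost \<beta> p0 p1 h0 h1 N1 S j
     = action_value \<beta> p0 h0 (cost \<beta> p0 p1 h0 h1 (S_active N1 S)) j
       - action_value \<beta> p1 h1 (cost \<beta> p0 p1 h0 h1 (S_active N1 S)) j"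
  unfolding marg_cost_def action_value_def
  by (simp add: sum_subtractf algebra_simps)

lemma cost_S_active_eq_action_value:
  fixes h0 h1 :: "'s::finite \<Rightarrow> real" and N1 S :: "'s set"
  assumes P: "stochastic p0" "stochastic p1" and \<beta>: "0 \<le> \<beta>" "\<beta> < 1"
  defines "v \<equiv> cost \<beta> p0 p1 h0 h1 (S_active N1 S)"
  shows "v j = (if j \<in> S \<union> N1 then action_value \<beta> p1 h1 v j else action_value \<beta> p0 h0 v j)"
proof -
  have "stochastic (policy_trans p0 p1 (S_active N1 S))"
    using P by (intro stochastic_policy_trans) (auto simp: S_active_def)
  then have "v j = policy_cost h0 h1 (S_active N1 S) j
                  + \<beta> * (\<Sum>k\<in>UNIV. policy_trans p0 p1 (S_active N1 S) j k * v k)"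
    unfolding v_def cost_eq_disc_value by (rule disc_value_bellman[OF _ \<beta>])
  then show ?thesis
    unfolding policy_cost_add_expectation by (simp add: S_active_def)
qed

lemma S_active_bellman_residual:
  fixes h0 h1 :: "'s::finite \<Rightarrow> real" and N1 S :: "'s set"
  assumes P: "stochastic p0" "stochastic p1" and \<beta>: "0 \<le> \<beta>" "\<beta> < 1"
    and partition: "N01 \<inter> N1 = {}" "N01 \<union> N1 = UNIV"
    and u_N1: "\<And>j. j \<in> N1 \<Longrightarrow> u j = 1"
  defines "v \<equiv> cost \<beta> p0 p1 h0 h1 (S_active N1 S)"
    and "c \<equiv> marg_cost \<beta> p0 p1 h0 h1 N1 S"
  shows "v j - policy_cost h0 h1 u j - \<beta> * (\<Sum>k\<in>UNIV. policy_trans p0 p1 u j k * v k)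
           = (if j \<in> S then - ((1 - u j) * c j) else if j \<in> N01 then u j * c j else 0)"
proof -
  let ?Q0 = "action_value \<beta> p0 h0 v j" and ?Q1 = "action_value \<beta> p1 h1 v j"
  have v: "v j = (if j \<in> S \<union> N1 then ?Q1 else ?Q0)"
    unfolding v_def by (rule cost_S_active_eq_action_value[OF P \<beta>])
  have c: "c j = ?Q0 - ?Q1"
    unfolding c_def v_def by (rule marg_cost_eq_action_value_diff)
  have "v j - policy_cost h0 h1 u j - \<beta> * (\<Sum>k\<in>UNIV. policy_trans p0 p1 u j k * v k)
          = v j - ((1 - u j) * ?Q0 + u j * ?Q1)"
    by (simp add: policy_cost_add_expectation[symmetric])
  also have "\<dots> = (if j \<in> S then - ((1 - u j) * c j) else if j \<in> N01 then u j * c j else 0)"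
    using partition u_N1[of j] by (auto simp: v c algebra_simps)
  finally show ?thesis .
qed

lemma sum_if_subset_split:
  fixes g0 g1 :: "'a::finite \<Rightarrow> 'b::comm_monoid_add"
  assumes "S \<subseteq> A"
  shows "(\<Sum>j\<in>UNIV. if j \<in> S then g0 j else if j \<in> A then g1 j else 0)
           = (\<Sum>j\<in>S. g0 j) + (\<Sum>j\<in>A - S. g1 j)"
proof -
  have "(\<Sum>j\<in>UNIV. if j \<in> S then g0 j else if j \<in> A then g1 j else 0)
          = (\<Sum>j\<in>S \<union> (A - S). if j \<in> S then g0 j else if j \<in> A then g1 j else 0)"
    using assms by (intro sum.mono_neutral_right) auto
  also have "\<dots> = (\<Sum>j\<in>S. g0 j) + (\<Sum>j\<in>A - S. g1 j)"
    by (subst sum.union_disjoint) (auto intro!: arg_cong2[where f = "(+)"] sum.cong)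
  finally show ?thesis .
qed

theorem proposition6:
  fixes N01 N1 :: "'s::finite set"
    and p0 p1 :: "'s \<Rightarrow> 's \<Rightarrow> real"
    and h0 h1 :: "'s \<Rightarrow> real"
    and \<beta> :: real
    and u :: "'s \<Rightarrow> real"
    and S :: "'s set"
    and i :: 's
  assumes partition: "N01 \<inter> N1 = {}" "N01 \<union> N1 = UNIV"
    and p0_nonneg: "\<And>j k. p0 j k \<ge> 0" and p0_stoch: "\<And>j. (\<Sum>k\<in>UNIV. p0 j k) = 1"
    and p1_nonneg: "\<And>j k. p1 j k \<ge> 0" and p1_stoch: "\<And>j. (\<Sum>k\<in>UNIV. p1 j k) = 1"
    and no_choice: "\<And>j. j \<in> N1 \<Longrightarrow> p1 j = p0 j \<and> h1 j = h0 j"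
    and beta: "0 < \<beta>" "\<beta> < 1"
    and u_range: "\<And>j. 0 \<le> u j \<and> u j \<le> 1"
    and u_N1: "\<And>j. j \<in> N1 \<Longrightarrow> u j = 1"
    and S_sub: "S \<subseteq> N01"
  shows "cost \<beta> p0 p1 h0 h1 (S_active N1 S) i
           + (\<Sum>j\<in>S. marg_cost \<beta> p0 p1 h0 h1 N1 S j * occ \<beta> p0 p1 u 0 i j)
         = cost \<beta> p0 p1 h0 h1 u i
           + (\<Sum>j\<in>N01 - S. marg_cost \<beta> p0 p1 h0 h1 N1 S j * occ \<beta> p0 p1 u 1 i j)"
proof -
  have P: "stochastic p0" "stochastic p1"
    using p0_nonneg p0_stoch p1_nonneg p1_stoch by (auto simp: stochastic_def)
  have \<beta>: "0 \<le> \<beta>" "\<beta> < 1"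
    using beta by auto
  define Pu where "Pu = policy_trans p0 p1 u"
  have Pu: "stochastic Pu"
    unfolding Pu_def using P u_range by (rule stochastic_policy_trans)
  define v where "v = cost \<beta> p0 p1 h0 h1 (S_active N1 S)"
  define c where "c = marg_cost \<beta> p0 p1 h0 h1 N1 S"
  define r where "r = (\<lambda>j. if j \<in> S then - ((1 - u j) * c j) else if j \<in> N01 then u j * c j else 0)"
  have "v i = cost \<beta> p0 p1 h0 h1 u i + disc_value \<beta> Pu r i"
    using disc_value_add_residual[OF Pu \<beta>, where w = v and f = "policy_cost h0 h1 u"]
    unfolding Pu_def v_def r_def c_def cost_eq_disc_value[where w = u]
    by (simp only: S_active_bellman_residual[OF P \<beta> partition u_N1])
  also have "disc_value \<beta> Pu r i
      = (\<Sum>j\<in>S. - (c j * occ \<beta> p0 p1 u 0 i j)) + (\<Sum>j\<in>N01 - S. c j * occ \<beta> p0 p1 u 1 i j)"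
    unfolding disc_value_eq_occupancy_sum[OF Pu \<beta>] r_def sum_if_subset_split[OF S_sub, symmetric]
    unfolding occ_eq_disc_occupancy[OF Pu[unfolded Pu_def] \<beta>] Pu_def
    by (intro sum.cong) (auto simp: act_prob_def)
  finally show ?thesis
    unfolding v_def c_def by (simp add: sum_negf)
qed

end
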